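(* Let $f:\{0,1\}^n\to\{0,1\}^m$ be a Boolean function which is either constant or balanced. For each $i=0,\dots,m-1$ run the algorithm $\mathrm{GPK}(\mathbf{e}_i)$ and let $\delta_i\in\{0,1\}^n$ be its output. If $f$ is constant, then with certainty $\delta_i=\mathbf{0}$ for all $i$; if $f$ is balanced, then with certainty $\delta_i\neq\mathbf{0}$ for at least one $i$. Consequently, deciding "constant" if all $\delta_i=\mathbf{0}$ and "balanced" otherwise is always correct.
   Context: A function $f:\{0,1\}^n\to\{0,1\}^m$ is constant if $f(\mathbf{x})$ is the same for all $\mathbf{x}$, and balanced if it takes exactly two distinct values, each on exactly half of the inputs. Bits are indexed from the right starting at $0$ and $\mathbf{e}_i=0^{m-1-i}\,1\,0^{i}\in\{0,1\}^m$. For strings $\mathbf{y},\mathbf{z}$ of equal length, $\mathbf{y}\oplus\mathbf{z}$ is bitwise XOR and $\mathbf{y}\cdot\mathbf{z}=\bigoplus_j y_jz_j$. $\mathbf{U}_f$ is the unitary with $\mathbf{U}_f(\ket{\mathbf{x}}_n\otimes\ket{\mathbf{z}}_m)=\ket{\mathbf{x}}_n\otimes\ket{\mathbf{z}\oplus f(\mathbf{x})}_m$; $\mathbf{H}_k=\mathbf{H}^{\otimes k}$ with $\mathbf{H}$ the one-qubit Hadamard gate. The algorithm $\mathrm{GPK}(\mathbf{y})$ for $\mathbf{y}\in\{0,1\}^m$: start in $\ket{\mathbf{0}}_n\otimes\ket{\mathbf{0}}_m$; apply Pauli $\mathbf{X}$ gates to get $\ket{\mathbf{0}}_n\otimes\ket{\mathbf{y}}_m$;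 apply $\mathbf{H}_{n+m}$; apply $\mathbf{U}_f$; apply $\mathbf{H}_n$ to the first register; measure the first register in the computational basis, giving the output in $\{0,1\}^n$. *)

theory Defs
  imports Complex_Main
begin

text \<open>A bit string in {0,1}^k is encoded as a natural number below 2^k,
  bit i (indexed from the right, starting at 0) being bit i of the number.
  So e_i corresponds to 2^i, the zero string to 0, and XOR is the bitwise xor on nat.
  A state of the (n+m)-qubit system is a function nat => complex on basis indices
  below 2^(n+m); the basis state |x>_n (x) |z>_m has index x * 2^m + z, so the
  first register occupies qubits m..m+n-1 and the second register qubits 0..m-1.\<close>

type_synonym state = "nat \<Rightarrow> complex"

definition const_fun :: "nat \<Rightarrow> (nat \<Rightarrow> nat) \<Rightarrow> bool" where
  "const_fun n f \<longleftrightarrow> (\<exists>c. \<forall>x<2^n. f x = c)"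

definition balanced_fun :: "nat \<Rightarrow> (nat \<Rightarrow> nat) \<Rightarrow> bool" where
  "balanced_fun n f \<longleftrightarrow> (\<exists>a b. a \<noteq> b \<and> f ` {..<2^n} = {a, b}
      \<and> 2 * card {x. x < 2^n \<and> f x = a} = 2^n
      \<and> 2 * card {x. x < 2^n \<and> f x = b} = 2^n)"

definition pauliX :: "nat \<Rightarrow> state \<Rightarrow> state" where
  "pauliX j \<psi> = (\<lambda>k. \<psi> (flip_bit j k))"

definition hadamard :: "nat \<Rightarrow> state \<Rightarrow> state" where
  "hadamard j \<psi> = (\<lambda>k. (\<psi> (unset_bit j k) + (if bit k j then -1 else 1) * \<psi> (set_bit j k))
                        / complex_of_real (sqrt 2))"

definition hadamards :: "nat list \<Rightarrow> state \<Rightarrow> state" where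
  "hadamards js \<psi> = fold hadamard js \<psi>"

text \<open>U_f: |x>|z> |-> |x>|z xor f x>, with m qubits in the second register.\<close>
definition Uf :: "nat \<Rightarrow> (nat \<Rightarrow> nat) \<Rightarrow> state \<Rightarrow> state" where
  "Uf m f \<psi> = (\<lambda>k. \<psi> ((k div 2^m) * 2^m + (xor (k mod 2^m) (f (k div 2^m)))))"

definition init_state :: state where
  "init_state = (\<lambda>k. if k = 0 then 1 else 0)"

definition gpk_state :: "nat \<Rightarrow> nat \<Rightarrow> (nat \<Rightarrow> nat) \<Rightarrow> nat \<Rightarrow> state" where
  "gpk_state n m f y =
     (let s1 = fold pauliX (filter (\<lambda>j. bit y j) [0..<m]) init_state;
          s2 = hadamards [0..<n+m] s1;
          s3 = Uf m f s2
      in hadamards [m..<m+n] s3)"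

definition gpk_prob :: "nat \<Rightarrow> nat \<Rightarrow> (nat \<Rightarrow> nat) \<Rightarrow> nat \<Rightarrow> nat \<Rightarrow> real" where
  "gpk_prob n m f y \<delta> = (\<Sum>z<2^m. (cmod (gpk_state n m f y (\<delta> * 2^m + z)))^2)"

end

theory Submission
  imports Defs
begin

text \<open>After the X gates the system is in the basis state |0>|y>. The Hadamards turn it into
  the uniform superposition with phases (-1)^(k.y); U_f multiplies the phase of |x>|z> by
  (-1)^(f(x).y) (phase kickback), and the final Hadamards on the first register sum these
  phases. Hence the amplitude of |0>|z> is (-1)^(z.y) (sum_x (-1)^(f(x).y)) / (2^n sqrt(2^m)),
  and measuring the first register gives 0 with probability |sum_x (-1)^(f(x).y)|^2 / 4^n.
  For constant f the sum has modulus 2^n. For balanced f with values a and b, choose a bit j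
  in which a and b differ: for y = e_j the two halves of the sum cancel.\<close>

lemma xor_div_2: "xor a b div 2 = xor (a div 2) (b div 2 :: nat)"
  by (simp add: bit_eq_iff bit_xor_iff flip: bit_Suc)

lemma xor_less_exp: "a < 2^m \<Longrightarrow> b < 2^m \<Longrightarrow> xor a b < (2::nat)^m"
  by (metis take_bit_nat_eq_self_iff take_bit_nat_less_exp take_bit_xor)

lemma mult_exp_add_less:
  fixes u w :: nat
  assumes "u < 2^n" "w < 2^m"
  shows "u * 2^m + w < 2^(n + m)"
proof -
  have "u * 2^m + w < (u + 1) * 2^m"
    using assms(2) by simp
  also have "\<dots> \<le> 2^n * 2^m"
    using assms(1) by (intro mult_right_mono) auto
  finally show ?thesis
    by (simp add: power_add)
qed

lemma bit_mult_exp_add: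
  fixes c r :: nat
  assumes "r < 2^j"
  shows "bit (c * 2^j + r) i = (if i < j then bit r i else bit c (i - j))"
proof (cases "i < j")
  case True
  have "take_bit j (c * 2^j + r) = r"
    using assms by (simp add: take_bit_eq_mod)
  then show ?thesis
    using True by (metis bit_take_bit_iff)
next
  case False
  then obtain d where i: "i = j + d"
    by (metis le_add_diff_inverse not_less)
  have "(c * 2^j + r) div 2^i = c div 2^d"
    using assms by (simp add: i power_add div_mult2_eq)
  then show ?thesis
    using i by (simp add: bit_iff_odd)
qed

lemma sum_lessThan_double:
  fixes g :: "nat \<Rightarrow> 'a::comm_monoid_add"
  shows "(\<Sum>u<2 * N. g u) = (\<Sum>u<N. g (2 * u) + g (2 * u + 1))"
  by (induction N) (simp_all add: algebra_simps)

lemma sum_two_valued: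
  assumes "finite A" "f ` A = {a, b}" "a \<noteq> b"
  shows "(\<Sum>u\<in>A. g (f u)) = of_nat (card {u\<in>A. f u = a}) * g a + of_nat (card {u\<in>A. f u = b}) * g b"
  using assms by (simp add: sum.image_gen[OF assms(1), of "\<lambda>u. g (f u)" f])

definition bool_sign :: "bool \<Rightarrow> complex" where
  "bool_sign b = (if b then -1 else 1)"

lemma norm_bool_sign [simp]: "cmod (bool_sign b) = 1"
  by (simp add: bool_sign_def)

text \<open>walsh_char n x u = (-1)^(x.u), the dot product taken over the n lowest bits.\<close>

fun walsh_char :: "nat \<Rightarrow> nat \<Rightarrow> nat \<Rightarrow> complex" where
  "walsh_char 0 x u = 1"
| "walsh_char (Suc n) x u = bool_sign (odd x \<and> odd u) * walsh_char n (x div 2) (u div 2)"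

lemma norm_walsh_char [simp]: "cmod (walsh_char n x u) = 1"
  by (induction n arbitrary: x u) (simp_all add: norm_mult)

lemma walsh_char_zero_left [simp]: "walsh_char n 0 u = 1"
  by (induction n arbitrary: u) (simp_all add: bool_sign_def)

lemma walsh_char_zero_right [simp]: "walsh_char n x 0 = 1"
  by (induction n arbitrary: x) (simp_all add: bool_sign_def)

lemma walsh_char_xor: "walsh_char n (xor a b) u = walsh_char n a u * walsh_char n b u"
  by (induction n arbitrary: a b u) (auto simp: even_xor_iff xor_div_2 bool_sign_def)

lemma walsh_char_exp: "i < n \<Longrightarrow> walsh_char n x (2^i) = bool_sign (bit x i)"
proof (induction n arbitrary: x i)
  case (Suc n)
  then show ?case
    by (cases i) (auto simp: bit_0 bit_Suc bool_sign_def)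
qed simp

lemma walsh_char_high_bits:
  "w < 2^m \<Longrightarrow> u < 2^m \<Longrightarrow> walsh_char (n + m) (q * 2^m + w) u = walsh_char m w u"
proof (induction m arbitrary: w u)
  case (Suc m)
  have "(q * 2^Suc m + w) div 2 = q * 2^m + w div 2" by simp
  moreover have "w div 2 < 2^m" "u div 2 < 2^m" using Suc.prems by auto
  ultimately show ?case using Suc.IH by simp
qed simp

lemma hadamard_apply:
  fixes q r :: nat
  assumes "r < 2^j"
  shows "hadamard j \<psi> (q * 2^j + r) =
           (\<psi> (2 * (q div 2) * 2^j + r) + bool_sign (odd q) * \<psi> ((2 * (q div 2) + 1) * 2^j + r))
           / complex_of_real (sqrt 2)"
proof -
  have "bit (2 * (q div 2)) t = (t \<noteq> 0 \<and> bit q t)"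
    and "bit (2 * (q div 2) + 1) t = (t = 0 \<or> bit q t)" for t
    by (cases t; simp add: bit_0 bit_Suc)+
  note bits = this bit_mult_exp_add[OF assms]
  have "bit (q * 2^j + r) j = odd q"
    by (simp add: bits bit_0)
  moreover have "unset_bit j (q * 2^j + r) = 2 * (q div 2) * 2^j + r"
    by (rule bit_eqI) (auto simp: bits bit_unset_bit_iff)
  moreover have "set_bit j (q * 2^j + r) = (2 * (q div 2) + 1) * 2^j + r"
    by (rule bit_eqI) (simp only: bits bit_set_bit_iff; auto)
  ultimately show ?thesis
    by (simp add: hadamard_def bool_sign_def)
qed

definition walsh_hadamard :: "nat \<Rightarrow> (nat \<Rightarrow> complex) \<Rightarrow> nat \<Rightarrow> complex" where
  "walsh_hadamard n \<phi> x = (\<Sum>u<2^n. walsh_char n x u * \<phi> u) / complex_of_real (sqrt 2) ^ n"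

lemma walsh_hadamard_Suc:
  "walsh_hadamard (Suc n) \<phi> x =
     (walsh_hadamard n (\<lambda>u. \<phi> (2 * u)) (x div 2)
      + bool_sign (odd x) * walsh_hadamard n (\<lambda>u. \<phi> (2 * u + 1)) (x div 2))
     / complex_of_real (sqrt 2)"
proof -
  have "(\<Sum>u<2^Suc n. walsh_char (Suc n) x u * \<phi> u)
      = (\<Sum>u<2^n. walsh_char n (x div 2) u * \<phi> (2 * u))
        + bool_sign (odd x) * (\<Sum>u<2^n. walsh_char n (x div 2) u * \<phi> (2 * u + 1))"
    by (simp add: sum_lessThan_double sum.distrib sum_distrib_left bool_sign_def)
  then show ?thesis
    by (simp add: walsh_hadamard_def field_simps)
qed

lemma walsh_hadamard_lincomb:
  "walsh_hadamard n (\<lambda>u. (\<phi> u + c * \<chi> u) / d) x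
     = (walsh_hadamard n \<phi> x + c * walsh_hadamard n \<chi> x) / d"
proof -
  have "(\<Sum>u<2^n. walsh_char n x u * ((\<phi> u + c * \<chi> u) / d))
      = ((\<Sum>u<2^n. walsh_char n x u * \<phi> u) + c * (\<Sum>u<2^n. walsh_char n x u * \<chi> u)) / d"
    by (simp add: sum_divide_distrib sum_distrib_left sum.distrib algebra_simps add_divide_distrib)
  then show ?thesis
    by (simp add: walsh_hadamard_def add_divide_distrib ac_simps)
qed

lemma hadamards_Cons: "hadamards (j # js) \<psi> = hadamards js (hadamard j \<psi>)"
  by (simp add: hadamards_def)

lemma hadamards_block_eq_walsh_hadamard:
  "x < 2^n \<Longrightarrow> r < 2^m \<Longrightarrow>
     hadamards [m..<m + n] \<psi> (x * 2^m + r) = walsh_hadamard n (\<lambda>u. \<psi> (u * 2^m + r)) x"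
proof (induction n arbitrary: m \<psi> x r)
  case 0
  then show ?case
    by (simp add: hadamards_def walsh_hadamard_def)
next
  case (Suc n)
  let ?r = "(x mod 2) * 2^m + r"
  have "x * 2^m + r = (x div 2 * 2 + x mod 2) * 2^m + r"
    by simp
  also have "\<dots> = (x div 2) * 2^Suc m + ?r"
    by (simp only: distrib_right power_Suc mult.assoc add.assoc)
  finally have x_split: "x * 2^m + r = (x div 2) * 2^Suc m + ?r" .
  have upt_split: "[m..<m + Suc n] = m # [Suc m..<Suc m + n]"
    by (simp add: upt_rec)
  have hadamard_m: "hadamard m \<psi> (u * 2^Suc m + ?r) = (\<psi> (2 * u * 2^m + r)
      + bool_sign (odd x) * \<psi> ((2 * u + 1) * 2^m + r)) / complex_of_real (sqrt 2)" for u
  proof -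
    have "u * 2^Suc m + ?r = (2 * u + x mod 2) * 2^m + r"
      by (simp add: algebra_simps)
    moreover have "(2 * u + x mod 2) div 2 = u" "odd (2 * u + x mod 2) \<longleftrightarrow> odd x"
      by auto
    ultimately show ?thesis
      using hadamard_apply[OF Suc.prems(2), of \<psi> "2 * u + x mod 2"] by (simp only:)
  qed
  have "x div 2 < 2^n"
    using Suc.prems(1) by simp
  moreover have "?r < 2^Suc m"
    using Suc.prems(2) by (auto simp: mod_2_eq_odd)
  ultimately have "hadamards [Suc m..<Suc m + n] (hadamard m \<psi>) ((x div 2) * 2^Suc m + ?r)
      = walsh_hadamard n (\<lambda>u. hadamard m \<psi> (u * 2^Suc m + ?r)) (x div 2)"
    by (rule Suc.IH)
  then show ?case
    by (simp only: x_split upt_split hadamards_Cons hadamard_m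
        walsh_hadamard_lincomb walsh_hadamard_Suc)
qed

definition basis_state :: "nat \<Rightarrow> state" where
  "basis_state a = (\<lambda>k. if k = a then 1 else 0)"

lemma pauliX_basis_state: "pauliX j (basis_state a) = basis_state (flip_bit j a)"
proof -
  have "flip_bit j k = a \<longleftrightarrow> k = flip_bit j a" for k :: nat
    by (auto simp: flip_bit_def xor.assoc)
  then show ?thesis
    by (simp add: pauliX_def basis_state_def)
qed

lemma fold_pauliX_init_state:
  "fold pauliX (filter (\<lambda>j. bit y j) [0..<m]) init_state = basis_state (take_bit m y)"
proof (induction m)
  case 0
  then show ?case
    by (simp add: init_state_def basis_state_def)
next
  case (Suc m)
  have "take_bit (Suc m) y = (if bit y m then flip_bit m (take_bit m y) else take_bit m y)"
    by (rule bit_eqI) (auto simp: bit_simps less_Suc_eq)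
  then show ?case
    using Suc.IH by (simp add: pauliX_basis_state)
qed

lemma walsh_hadamard_basis_state:
  "a < 2^n \<Longrightarrow> walsh_hadamard n (basis_state a) x = walsh_char n x a / complex_of_real (sqrt 2) ^ n"
  by (simp add: walsh_hadamard_def basis_state_def if_distrib cong: if_cong)

lemma Uf_apply: "z < 2^m \<Longrightarrow> Uf m f \<psi> (u * 2^m + z) = \<psi> (u * 2^m + xor z (f u))"
  by (simp add: Uf_def)

lemma gpk_state_first_register_zero:
  assumes range: "\<forall>x<2^n. f x < 2^m" and y: "y < 2^m" and z: "z < 2^m"
  shows "gpk_state n m f y z = walsh_char m z y * (\<Sum>u<2^n. walsh_char m (f u) y)
           / (complex_of_real (sqrt 2) ^ (n + m) * complex_of_real (sqrt 2) ^ n)"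
proof -
  define c where "c = complex_of_real (sqrt 2)"
  define s2 where "s2 = hadamards [0..<n + m] (basis_state y)"
  have s2_apply: "s2 k = walsh_char (n + m) k y / c ^ (n + m)" if "k < 2^(n + m)" for k
  proof -
    have "y < 2^(n + m)"
      using y by (simp add: less_le_trans)
    then show ?thesis
      using hadamards_block_eq_walsh_hadamard[OF that, of 0 0 "basis_state y"]
      by (simp add: s2_def c_def walsh_hadamard_basis_state)
  qed
  have Uf_s2_apply: "Uf m f s2 (u * 2^m + z) = walsh_char m z y * walsh_char m (f u) y / c ^ (n + m)"
    if "u < 2^n" for u
  proof -
    have "xor z (f u) < 2^m"
      using xor_less_exp z range that by blast
    then show ?thesis
      using Uf_apply[OF z] s2_apply mult_exp_add_less[OF that] walsh_char_high_bits[OF _ y]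
      by (simp add: walsh_char_xor)
  qed
  have "gpk_state n m f y z = hadamards [m..<m + n] (Uf m f s2) z"
    using y by (simp add: gpk_state_def s2_def fold_pauliX_init_state take_bit_nat_eq_self)
  also have "\<dots> = walsh_hadamard n (\<lambda>u. Uf m f s2 (u * 2^m + z)) 0"
    using hadamards_block_eq_walsh_hadamard[of 0 n z m "Uf m f s2"] z by simp
  also have "\<dots> = (\<Sum>u<2^n. walsh_char m z y * walsh_char m (f u) y / c ^ (n + m)) / c ^ n"
    by (simp add: walsh_hadamard_def c_def Uf_s2_apply)
  also have "\<dots> = walsh_char m z y * (\<Sum>u<2^n. walsh_char m (f u) y) / (c ^ (n + m) * c ^ n)"
    by (simp add: sum_distrib_left sum_divide_distrib)
  finally show ?thesis
    unfolding c_def .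
qed

lemma gpk_prob_first_register_zero:
  assumes range: "\<forall>x<2^n. f x < 2^m" and y: "y < 2^m"
  shows "gpk_prob n m f y 0 = (cmod (\<Sum>u<2^n. walsh_char m (f u) y) / 2^n)^2"
proof -
  define S where "S = cmod (\<Sum>u<2^n. walsh_char m (f u) y)"
  have norm_sqrt2_pow: "cmod (complex_of_real (sqrt 2) ^ k) ^ 2 = 2^k" for k
  proof -
    have "(sqrt 2 ^ k)^2 = (sqrt 2 ^ 2)^k"
      by (metis power_mult mult.commute)
    then show ?thesis
      by (simp add: norm_power)
  qed
  have "(cmod (gpk_state n m f y z))^2 = S^2 / (2^(n + m) * 2^n)" if "z < 2^m" for z
    using gpk_state_first_register_zero[OF range y that]
    by (simp add: S_def norm_mult norm_divide power_divide power_mult_distrib norm_sqrt2_pow)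
  then have "gpk_prob n m f y 0 = (\<Sum>z<(2::nat)^m. S^2 / (2^(n + m) * 2^n))"
    by (simp add: gpk_prob_def)
  also have "\<dots> = (S / 2^n)^2"
    by (simp add: power_add power2_eq_square field_simps)
  finally show ?thesis
    unfolding S_def .
qed

lemma const_fun_norm_walsh_sum:
  assumes "const_fun n f"
  shows "cmod (\<Sum>u<2^n. walsh_char m (f u) y) = 2^n"
proof -
  obtain c where "\<forall>x<2^n. f x = c"
    using assms by (auto simp: const_fun_def)
  then have "(\<Sum>u<2^n. walsh_char m (f u) y) = 2^n * walsh_char m c y"
    by simp
  then show ?thesis
    by (simp add: norm_mult norm_power)
qed

lemma balanced_fun_ex_walsh_sum_eq_0:
  assumes range: "\<forall>x<2^n. f x < 2^m" and "balanced_fun n f"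
  shows "\<exists>j<m. (\<Sum>u<2^n. walsh_char m (f u) (2^j)) = 0"
proof -
  obtain a b where ab: "a \<noteq> b" "f ` {..<2^n} = {a, b}"
    and card_a: "2 * card {x. x < 2^n \<and> f x = a} = 2^n"
    and card_b: "2 * card {x. x < 2^n \<and> f x = b} = 2^n"
    using assms(2) unfolding balanced_fun_def by blast
  have "\<forall>v\<in>f ` {..<2^n}. v < 2^m"
    using range by auto
  then have "a < 2^m" "b < 2^m"
    using ab(2) by auto
  moreover obtain j where j: "bit a j \<noteq> bit b j"
    using ab(1) by (metis bit_eqI)
  ultimately have "j < m"
    by (metis bit_take_bit_iff take_bit_nat_eq_self_iff)
  have "card {u\<in>{..<2^n}. f u = a} = card {u\<in>{..<2^n}. f u = b}"
    using card_a card_b by simp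
  then have "(\<Sum>u<2^n. walsh_char m (f u) (2^j))
      = of_nat (card {u\<in>{..<2^n}. f u = a}) * (walsh_char m a (2^j) + walsh_char m b (2^j))"
    using sum_two_valued[of "{..<2^n}" f a b] ab by (simp add: distrib_left)
  also have "\<dots> = 0"
    using j \<open>j < m\<close> by (auto simp: walsh_char_exp bool_sign_def)
  finally show ?thesis
    using \<open>j < m\<close> by blast
qed

theorem theorem3p4:
  fixes n m :: nat and f :: "nat \<Rightarrow> nat"
  assumes range: "\<forall>x<2^n. f x < 2^m"
    and cb: "const_fun n f \<or> balanced_fun n f"
  shows "(const_fun n f \<longrightarrow> (\<forall>i<m. gpk_prob n m f (2^i) 0 = 1))
       \<and> (balanced_fun n f \<longrightarrow> (\<Prod>i<m. gpk_prob n m f (2^i) 0) = 0)"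
proof (intro conjI impI allI)
  fix i assume "const_fun n f" "i < m"
  then show "gpk_prob n m f (2^i) 0 = 1"
    using gpk_prob_first_register_zero[OF range] const_fun_norm_walsh_sum by simp
next
  assume "balanced_fun n f"
  then obtain j where "j < m" "(\<Sum>u<2^n. walsh_char m (f u) (2^j)) = 0"
    using balanced_fun_ex_walsh_sum_eq_0[OF range] by blast
  then have "gpk_prob n m f (2^j) 0 = 0"
    using gpk_prob_first_register_zero[OF range] by simp
  then show "(\<Prod>i<m. gpk_prob n m f (2^i) 0) = 0"
    using \<open>j < m\<close> by (auto simp: prod_zero_iff)
qed

end
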